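(* Let $a>0$, $b>0$, $c\ge 0$ be constants and consider, for a function $u(t,x)$ on $t>0$, $x>0$, the non-linear Black--Scholes equation $$u_t+ax^2u_{xx}+bx^3u_{xx}^2+cxu_x-cu=0.$$ Define new variables $(\bar t,\bar x,\bar u)$ by if $c=0$: $\bar t=t$, $\bar x=\log\frac{x}{b}$, $\bar u=\frac{bu}{x}+\frac a2\log\frac xb-\frac{a^2}{4}t$; if $c>0$: $\bar t=ct$, $\bar x=\log\frac{cx}{b}-ct$, $\bar u=\frac{bu}{cx}+\frac{a}{2c}\log\frac{cx}{b}-\frac a2\left(1+\frac{a}{2c}\right)t$. Then $u(t,x)$ is a (sufficiently smooth) solution of the Black--Scholes equation above if and only if $\bar u$, regarded as a function of $(\bar t,\bar x)$, satisfies $$\bar u_{\bar t}+\left(\bar u_{\bar x}+\bar u_{\bar x\bar x}\right)^2=0.$$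
   Context: Here $\log$ is the natural logarithm. In the formula for $\bar u$ the variable $t$ is the original time variable. *)

theory Defs
  imports "HOL-Analysis.Analysis"
begin

definition pt :: "(real \<Rightarrow> real \<Rightarrow> real) \<Rightarrow> real \<Rightarrow> real \<Rightarrow> real" where
  "pt f t x = deriv (\<lambda>s. f s x) t"

definition px :: "(real \<Rightarrow> real \<Rightarrow> real) \<Rightarrow> real \<Rightarrow> real \<Rightarrow> real" where
  "px f t x = deriv (\<lambda>y. f t y) x"

definition pxx :: "(real \<Rightarrow> real \<Rightarrow> real) \<Rightarrow> real \<Rightarrow> real \<Rightarrow> real" where
  "pxx f t x = deriv (\<lambda>y. px f t y) x"

text \<open>The point (t, x) with t > 0, x > 0 is the unique preimage of (tb, xb) under the
  change of variables:
  c = 0:  tb = t, xb = ln (x/b)        i.e.  t = tb,   x = b * exp xb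
  c > 0:  tb = c t, xb = ln (c x/b) - c t  i.e.  t = tb/c, x = (b/c) * exp (xb + tb).
  ubar is then given by the formulas of the paper in terms of t, x, u(t,x).\<close>
definition ubar :: "real \<Rightarrow> real \<Rightarrow> real \<Rightarrow> (real \<Rightarrow> real \<Rightarrow> real) \<Rightarrow> real \<Rightarrow> real \<Rightarrow> real" where
  "ubar a b c u tb xb =
     (if c = 0 then
        (let t = tb; x = b * exp xb in
           b * u t x / x + a / 2 * ln (x / b) - a^2 / 4 * t)
      else
        (let t = tb / c; x = b / c * exp (xb + tb) in
           b * u t x / (c * x) + a / (2 * c) * ln (c * x / b)
             - a / 2 * (1 + a / (2 * c)) * t))"

end

theory Submission
  imports Defs
begin

(* In both cases the change of variables is t = m tb, x = b m exp (y + m c tb), with m = 1 if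
   c = 0 and m = 1/c if c > 0, and ubar = exp (-(y + m c tb)) u + (m a/2) y - (m a/2)^2 tb.
   By the chain rule, in ubar_y + ubar_yy the terms in u and u_x cancel, leaving
   b m x u_xx + m a/2; squaring it produces the diffusion and the nonlinear term, so that
     ubar_tb + (ubar_y + ubar_yy)^2 = m exp (-(y + m c tb)) (u_t + a x^2 u_xx + b x^3 u_xx^2 + c x u_x - c u).
   The change of variables maps tb > 0, y real onto t > 0, x > 0, and the factor is positive. *)

lemma has_real_derivative_compose_curried:
  assumes F: "((\<lambda>p. f (fst p) (snd p)) has_derivative F') (at (g s, h s))"
    and g: "(g has_real_derivative g') (at s)" and h: "(h has_real_derivative h') (at s)"
  shows "((\<lambda>s. f (g s) (h s)) has_real_derivative F' (g', h')) (at s)"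
proof -
  have "((\<lambda>s. (g s, h s)) has_derivative (\<lambda>r. (g' * r, h' * r))) (at s)"
    using g h unfolding has_field_derivative_def by (rule has_derivative_Pair)
  from diff_chain_at[OF this F]
  have "((\<lambda>s. f (g s) (h s)) has_derivative (\<lambda>r. F' (g' * r, h' * r))) (at s)"
    by (simp add: o_def)
  moreover have "(\<lambda>r. F' (g' * r, h' * r)) = (*) (F' (g', h'))"
    using linear_scale[OF has_derivative_linear[OF F], of _ "(g', h')"]
    by (simp add: fun_eq_iff mult.commute)
  ultimately show ?thesis
    unfolding has_field_derivative_def by simp
qed

lemma partials_eq_derivative:
  assumes F: "((\<lambda>p. f (fst p) (snd p)) has_derivative F') (at (t, x))"
  shows "pt f t x = F' (1, 0)" and "px f t x = F' (0, 1)"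
proof -
  have "((\<lambda>s. f s x) has_real_derivative F' (1, 0)) (at t)"
    using has_real_derivative_compose_curried[where g="\<lambda>s. s" and h="\<lambda>_. x" and s=t] F
    by (simp add: DERIV_ident)
  then show "pt f t x = F' (1, 0)" unfolding pt_def by (rule DERIV_imp_deriv)
  have "((\<lambda>y. f t y) has_real_derivative F' (0, 1)) (at x)"
    using has_real_derivative_compose_curried[where g="\<lambda>_. t" and h="\<lambda>y. y" and s=x] F
    by (simp add: DERIV_ident)
  then show "px f t x = F' (0, 1)" unfolding px_def by (rule DERIV_imp_deriv)
qed

lemma DERIV_compose_curried:
  assumes "(\<lambda>p. f (fst p) (snd p)) differentiable (at (g s, h s))"
    and "(g has_real_derivative g') (at s)" and "(h has_real_derivative h') (at s)"
  shows "((\<lambda>s. f (g s) (h s)) has_real_derivative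
           g' * pt f (g s) (h s) + h' * px f (g s) (h s)) (at s)"
proof -
  obtain F' where F: "((\<lambda>p. f (fst p) (snd p)) has_derivative F') (at (g s, h s))"
    using assms(1) differentiable_def by blast
  have lin: "linear F'" using F by (rule has_derivative_linear)
  have "F' (g', h') = g' * F' (1, 0) + h' * F' (0, 1)"
    using linear_add[OF lin, of "(g', 0)" "(0, h')"]
      linear_scale[OF lin, of g' "(1, 0)"] linear_scale[OF lin, of h' "(0, 1)"]
    by simp
  then show ?thesis
    using has_real_derivative_compose_curried[OF F assms(2,3)] partials_eq_derivative[OF F]
    by simp
qed

lemma DERIV_curried_along_exp:
  assumes "(\<lambda>p. f (fst p) (snd p)) differentiable (at (t, B * exp (y + k)))"
  shows "((\<lambda>y. f t (B * exp (y + k))) has_real_derivative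
           B * exp (y + k) * px f t (B * exp (y + k))) (at y)"
proof -
  have "((\<lambda>_. t) has_real_derivative 0) (at y)"
    and "((\<lambda>y. B * exp (y + k)) has_real_derivative B * exp (y + k)) (at y)"
    by (auto intro!: derivative_eq_intros)
  from DERIV_compose_curried[OF assms this] show ?thesis by simp
qed

definition ubar_scaled ::
    "real \<Rightarrow> real \<Rightarrow> real \<Rightarrow> real \<Rightarrow> (real \<Rightarrow> real \<Rightarrow> real) \<Rightarrow> real \<Rightarrow> real \<Rightarrow> real" where
  "ubar_scaled a b c m u tb y =
     exp (-(y + m*c*tb)) * u (m*tb) (b*m * exp (y + m*c*tb)) + m*a/2 * y - (m*a/2)^2 * tb"

lemma ubar_eq_ubar_scaled:
  assumes "b > 0" and "c \<ge> 0"
  shows "ubar a b c u = ubar_scaled a b c (if c = 0 then 1 else 1/c) u"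
proof (intro ext)
  fix tb y
  show "ubar a b c u tb y = ubar_scaled a b c (if c = 0 then 1 else 1/c) u tb y"
  proof (cases "c = 0")
    case True
    then show ?thesis using assms unfolding ubar_def ubar_scaled_def Let_def
      by (simp add: exp_minus field_simps power2_eq_square)
  next
    case False
    then have "c > 0" using assms by simp
    moreover have "ln (c * (b / c * exp (y + tb)) / b) = y + tb" using \<open>c > 0\<close> assms by simp
    ultimately show ?thesis using assms unfolding ubar_def ubar_scaled_def Let_def
      by (simp add: exp_minus field_simps power2_eq_square flip: exp_add)
  qed
qed

definition bs_residual :: "real \<Rightarrow> real \<Rightarrow> real \<Rightarrow> (real \<Rightarrow> real \<Rightarrow> real) \<Rightarrow> real \<Rightarrow> real \<Rightarrow> real" where
  "bs_residual a b c u t x =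
     pt u t x + a * x^2 * pxx u t x + b * x^3 * (pxx u t x)^2 + c * x * px u t x - c * u t x"

(* e stands for exp (-(y + m c tb)) and x for b m exp (y + m c tb). *)
lemma bs_residual_change_of_variables:
  fixes a b c m e x u ut ux uxx :: real
  assumes "e = b*m / x" and "x > 0"
  shows "- m*c * e * u + m * e * ut + m*c * (b*m) * ux - (m*a/2)^2
           + ((- e * u + b*m * ux + m*a/2) + (e * u - b*m * ux + b*m * x * uxx))^2
         = e * m * (ut + a * x^2 * uxx + b * x^3 * uxx^2 + c * x * ux - c * u)"
  using assms(2) unfolding assms(1) by (simp add: field_simps power2_eq_square power3_eq_cube)

context
  fixes a b c m tb :: real and u :: "real \<Rightarrow> real \<Rightarrow> real"
  assumes pos: "m > 0" "b > 0" "tb > 0"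
begin

lemma px_ubar_scaled:
  assumes "\<forall>t>0. \<forall>x>0. (\<lambda>p. u (fst p) (snd p)) differentiable (at (t, x))"
  shows "px (ubar_scaled a b c m u) tb y =
           - exp (-(y + m*c*tb)) * u (m*tb) (b*m * exp (y + m*c*tb))
           + b*m * px u (m*tb) (b*m * exp (y + m*c*tb)) + m*a/2"
proof -
  let ?s = "y + m*c*tb" and ?x = "b*m * exp (y + m*c*tb)"
  have "((\<lambda>y. u (m*tb) (b*m * exp (y + m*c*tb))) has_real_derivative ?x * px u (m*tb) ?x) (at y)"
    using assms pos by (intro DERIV_curried_along_exp) simp
  then have "((\<lambda>y. ubar_scaled a b c m u tb y) has_real_derivative
      - exp (- ?s) * u (m*tb) ?x + exp (- ?s) * (?x * px u (m*tb) ?x) + m*a/2) (at y)"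
    unfolding ubar_scaled_def by (auto intro!: derivative_eq_intros)
  then show ?thesis unfolding px_def by (simp add: DERIV_imp_deriv exp_diff exp_minus exp_add)
qed

lemma pxx_ubar_scaled:
  assumes "\<forall>t>0. \<forall>x>0. (\<lambda>p. u (fst p) (snd p)) differentiable (at (t, x))"
    and "\<forall>t>0. \<forall>x>0. (\<lambda>p. px u (fst p) (snd p)) differentiable (at (t, x))"
  shows "pxx (ubar_scaled a b c m u) tb y =
           exp (-(y + m*c*tb)) * u (m*tb) (b*m * exp (y + m*c*tb))
           - b*m * px u (m*tb) (b*m * exp (y + m*c*tb))
           + b*m * (b*m * exp (y + m*c*tb)) * pxx u (m*tb) (b*m * exp (y + m*c*tb))"
proof -
  let ?s = "y + m*c*tb" and ?x = "b*m * exp (y + m*c*tb)"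
  have "((\<lambda>y. u (m*tb) (b*m * exp (y + m*c*tb))) has_real_derivative ?x * px u (m*tb) ?x) (at y)"
    using assms(1) pos by (intro DERIV_curried_along_exp) simp
  moreover have "((\<lambda>y. px u (m*tb) (b*m * exp (y + m*c*tb))) has_real_derivative
      ?x * pxx u (m*tb) ?x) (at y)"
    using DERIV_curried_along_exp[of "px u"] assms(2) pos by (simp add: px_def pxx_def)
  ultimately have "((\<lambda>y. px (ubar_scaled a b c m u) tb y) has_real_derivative
      exp (- ?s) * u (m*tb) ?x - exp (- ?s) * (?x * px u (m*tb) ?x)
        + b*m * (?x * pxx u (m*tb) ?x)) (at y)"
    unfolding px_ubar_scaled[OF assms(1)] by (auto intro!: derivative_eq_intros)
  then show ?thesis unfolding pxx_def by (simp add: DERIV_imp_deriv exp_diff exp_minus exp_add)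
qed

lemma pt_ubar_scaled:
  assumes "\<forall>t>0. \<forall>x>0. (\<lambda>p. u (fst p) (snd p)) differentiable (at (t, x))"
  shows "pt (ubar_scaled a b c m u) tb y =
           - m*c * exp (-(y + m*c*tb)) * u (m*tb) (b*m * exp (y + m*c*tb))
           + m * exp (-(y + m*c*tb)) * pt u (m*tb) (b*m * exp (y + m*c*tb))
           + m*c * (b*m) * px u (m*tb) (b*m * exp (y + m*c*tb)) - (m*a/2)^2"
proof -
  let ?s = "y + m*c*tb" and ?x = "b*m * exp (y + m*c*tb)"
  have "(\<lambda>p. u (fst p) (snd p)) differentiable (at (m*tb, ?x))"
    using assms pos by simp
  moreover have "((\<lambda>r. m*r) has_real_derivative m) (at tb)"
    and "((\<lambda>r. b*m * exp (y + m*c*r)) has_real_derivative ?x * (m*c)) (at tb)"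
    by (auto intro!: derivative_eq_intros)
  ultimately have "((\<lambda>r. u (m*r) (b*m * exp (y + m*c*r))) has_real_derivative
      m * pt u (m*tb) ?x + ?x * (m*c) * px u (m*tb) ?x) (at tb)"
    by (rule DERIV_compose_curried[where g="\<lambda>r. m*r" and s=tb, simplified])
  then have "((\<lambda>r. ubar_scaled a b c m u r y) has_real_derivative
      exp (- ?s) * (- (m*c)) * u (m*tb) ?x
        + exp (- ?s) * (m * pt u (m*tb) ?x + ?x * (m*c) * px u (m*tb) ?x) - (m*a/2)^2) (at tb)"
    unfolding ubar_scaled_def by (auto intro!: derivative_eq_intros)
  then show ?thesis unfolding pt_def
    by (simp add: DERIV_imp_deriv exp_diff exp_minus exp_add field_simps)
qed

lemma ubar_scaled_equation:
  assumes "\<forall>t>0. \<forall>x>0. (\<lambda>p. u (fst p) (snd p)) differentiable (at (t, x))"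
    and "\<forall>t>0. \<forall>x>0. (\<lambda>p. px u (fst p) (snd p)) differentiable (at (t, x))"
  shows "pt (ubar_scaled a b c m u) tb y
           + (px (ubar_scaled a b c m u) tb y + pxx (ubar_scaled a b c m u) tb y)^2
         = exp (-(y + m*c*tb)) * m * bs_residual a b c u (m*tb) (b*m * exp (y + m*c*tb))"
proof -
  let ?x = "b*m * exp (y + m*c*tb)"
  have "exp (-(y + m*c*tb)) = b*m / ?x"
    using pos by (simp add: exp_diff exp_minus exp_add field_simps)
  moreover have "?x > 0" using pos by simp
  ultimately show ?thesis
    unfolding pt_ubar_scaled[OF assms(1)] px_ubar_scaled[OF assms(1)] pxx_ubar_scaled[OF assms]
      bs_residual_def
    by (rule bs_residual_change_of_variables)
qed

end

lemma all_pos_iff_all_exp_coords: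
  fixes L :: "real \<Rightarrow> real \<Rightarrow> real"
  assumes "m > 0" and "B > 0"
  shows "(\<forall>t>0. \<forall>x>0. L t x = 0) \<longleftrightarrow> (\<forall>tb>0. \<forall>y. L (m*tb) (B * exp (y + k*tb)) = 0)"
proof (intro iffI allI impI)
  fix t x :: real
  assume "\<forall>tb>0. \<forall>y. L (m*tb) (B * exp (y + k*tb)) = 0" and "t > 0" "x > 0"
  moreover have "m * (t/m) = t" and "B * exp ((ln (x/B) - k * (t/m)) + k * (t/m)) = x"
    using assms \<open>x > 0\<close> by simp_all
  ultimately show "L t x = 0" using assms
    by (metis divide_pos_pos)
qed (use assms in simp)

theorem mainTheorem1:
  fixes a b c :: real and u :: "real \<Rightarrow> real \<Rightarrow> real"
  assumes "a > 0" and "b > 0" and "c \<ge> 0"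
    and smooth1: "\<forall>t>0. \<forall>x>0. (\<lambda>p. u (fst p) (snd p)) differentiable (at (t, x))"
    and smooth2: "\<forall>t>0. \<forall>x>0. (\<lambda>p. px u (fst p) (snd p)) differentiable (at (t, x))"
  shows "(\<forall>t>0. \<forall>x>0.
            pt u t x + a * x^2 * pxx u t x + b * x^3 * (pxx u t x)^2
              + c * x * px u t x - c * u t x = 0)
     \<longleftrightarrow> (\<forall>tb>0. \<forall>xb.
            pt (ubar a b c u) tb xb
              + (px (ubar a b c u) tb xb + pxx (ubar a b c u) tb xb)^2 = 0)"
proof -
  define m :: real where "m = (if c = 0 then 1 else 1/c)"
  have "m > 0" using \<open>c \<ge> 0\<close> by (simp add: m_def)
  have "(\<forall>t>0. \<forall>x>0. bs_residual a b c u t x = 0)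
      \<longleftrightarrow> (\<forall>tb>0. \<forall>y. bs_residual a b c u (m*tb) (b*m * exp (y + m*c*tb)) = 0)"
    using \<open>m > 0\<close> \<open>b > 0\<close> by (intro all_pos_iff_all_exp_coords) simp_all
  also have "\<dots> \<longleftrightarrow> (\<forall>tb>0. \<forall>y. pt (ubar_scaled a b c m u) tb y
      + (px (ubar_scaled a b c m u) tb y + pxx (ubar_scaled a b c m u) tb y)^2 = 0)"
    using ubar_scaled_equation[OF \<open>m > 0\<close> \<open>b > 0\<close> _ smooth1 smooth2] \<open>m > 0\<close> by simp
  finally show ?thesis
    unfolding bs_residual_def ubar_eq_ubar_scaled[OF \<open>b > 0\<close> \<open>c \<ge> 0\<close>] m_def .
qed

end
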